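(* Let $\gamma_a,\gamma_s>0$, $\lambda\ge 0$, $q>0$, $\sigma_B>0$, $\varepsilon_a\in(0,2)$, let $\beta_a,\beta_s:\mathbb R\to\mathbb R$ be globally Lipschitz continuous with $\beta_a\ge0$, $\beta_s>0$, and let $T_a^{(0)}\ge 0$, $T_s^{(0)}\ge 0$. Then the solution of \[ \begin{cases} \gamma_a T_a'=-\lambda(T_a-T_s)+\varepsilon_a\sigma_B|T_s|^3T_s-2\varepsilon_a\sigma_B|T_a|^3T_a+q\beta_a(T_a),\\ \gamma_s T_s'=-\lambda(T_s-T_a)-\sigma_B|T_s|^3T_s+\varepsilon_a\sigma_B|T_a|^3T_a+q\beta_s(T_s),\\ T_a(0)=T_a^{(0)},\quad T_s(0)=T_s^{(0)} \end{cases} \] converges, as $t\to+\infty$, to an equilibrium point of this system (a zero of its right-hand side). *)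

theory Defs
  imports "HOL-Analysis.Analysis"
begin

text \<open>Right-hand sides (multiplied form, i.e. gamma_a Ta' = rhs_a, gamma_s Ts' = rhs_s).\<close>

definition rhs_a :: "real \<Rightarrow> real \<Rightarrow> real \<Rightarrow> real \<Rightarrow> (real \<Rightarrow> real) \<Rightarrow> real \<Rightarrow> real \<Rightarrow> real" where
  "rhs_a lam q sB ea betaa Ta Ts =
     - lam * (Ta - Ts) + ea * sB * \<bar>Ts\<bar>^3 * Ts - 2 * ea * sB * \<bar>Ta\<bar>^3 * Ta + q * betaa Ta"

definition rhs_s :: "real \<Rightarrow> real \<Rightarrow> real \<Rightarrow> real \<Rightarrow> (real \<Rightarrow> real) \<Rightarrow> real \<Rightarrow> real \<Rightarrow> real" where
  "rhs_s lam q sB ea betas Ta Ts =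
     - lam * (Ts - Ta) - sB * \<bar>Ts\<bar>^3 * Ts + ea * sB * \<bar>Ta\<bar>^3 * Ta + q * betas Ts"

end

theory Submission
  imports Defs
begin

(*
  Both right-hand sides are Lipschitz on bounded sets, and the system is cooperative: the equation
  for T_a is increasing in T_s and vice versa. Hence a sub-solution starting below a super-solution
  stays below it. The constant sub-solution (0, 0) and a constant super-solution (m, k m) with
  eps_a < k^4 < 2 and m large confine the solution to a box. Comparing the solution with its own
  time shifts shows that once T_a' and T_s' are both positive (both negative), both components are
  nondecreasing (nonincreasing) from then on, and once both vanish the solution is at rest; otherwise
  T_a' - T_s' never vanishes, so T_a' and T_s' have fixed opposite signs. In every case the solution
  is eventually monotone and bounded, hence convergent, and since the derivatives converge too their
  limit must be zero.
*)

section \<open>Cooperative planar systems\<close>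

definition cooperative :: "(real \<Rightarrow> real \<Rightarrow> real) \<Rightarrow> (real \<Rightarrow> real \<Rightarrow> real) \<Rightarrow> bool" where
  "cooperative F G \<longleftrightarrow> (\<forall>a. mono (F a)) \<and> (\<forall>s. mono (\<lambda>a. G a s))"

definition locally_lipschitz2 :: "(real \<Rightarrow> real \<Rightarrow> real) \<Rightarrow> bool" where
  "locally_lipschitz2 F \<longleftrightarrow>
     (\<forall>B. \<exists>K. \<forall>x\<in>{-B..B}. K-lipschitz_on {-B..B} (\<lambda>a. F a x) \<and> K-lipschitz_on {-B..B} (F x))"

definition ode_subsolution ::
    "(real \<Rightarrow> real \<Rightarrow> real) \<Rightarrow> (real \<Rightarrow> real \<Rightarrow> real) \<Rightarrow> real \<Rightarrow> (real \<Rightarrow> real) \<Rightarrow> (real \<Rightarrow> real) \<Rightarrow> bool"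
  where "ode_subsolution F G t0 xa xs \<longleftrightarrow>
     continuous_on {t0..} xa \<and> continuous_on {t0..} xs \<and>
     (\<forall>t>t0. \<exists>da ds. (xa has_real_derivative da) (at t) \<and> (xs has_real_derivative ds) (at t) \<and>
                     da \<le> F (xa t) (xs t) \<and> ds \<le> G (xa t) (xs t))"

definition ode_supersolution ::
    "(real \<Rightarrow> real \<Rightarrow> real) \<Rightarrow> (real \<Rightarrow> real \<Rightarrow> real) \<Rightarrow> real \<Rightarrow> (real \<Rightarrow> real) \<Rightarrow> (real \<Rightarrow> real) \<Rightarrow> bool"
  where "ode_supersolution F G t0 xa xs \<longleftrightarrow>
     continuous_on {t0..} xa \<and> continuous_on {t0..} xs \<and>
     (\<forall>t>t0. \<exists>da ds. (xa has_real_derivative da) (at t) \<and> (xs has_real_derivative ds) (at t) \<and>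
                     F (xa t) (xs t) \<le> da \<and> G (xa t) (xs t) \<le> ds)"

definition ode_solution ::
    "(real \<Rightarrow> real \<Rightarrow> real) \<Rightarrow> (real \<Rightarrow> real \<Rightarrow> real) \<Rightarrow> real \<Rightarrow> (real \<Rightarrow> real) \<Rightarrow> (real \<Rightarrow> real) \<Rightarrow> bool"
  where "ode_solution F G t0 xa xs \<longleftrightarrow>
     continuous_on {t0..} xa \<and> continuous_on {t0..} xs \<and>
     (\<forall>t>t0. (xa has_real_derivative F (xa t) (xs t)) (at t) \<and>
             (xs has_real_derivative G (xa t) (xs t)) (at t))"

lemma cooperative_separable:
  "mono Q \<Longrightarrow> mono P' \<Longrightarrow> cooperative (\<lambda>a s. P a + Q s) (\<lambda>a s. P' a + Q' s)"
  unfolding cooperative_def mono_def by auto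

lemma cooperative_divide:
  "cooperative F G \<Longrightarrow> 0 < c \<Longrightarrow> 0 < d \<Longrightarrow> cooperative (\<lambda>a s. F a s / c) (\<lambda>a s. G a s / d)"
  unfolding cooperative_def mono_def by (auto intro: divide_right_mono)

lemma locally_lipschitz2_separable:
  assumes "\<And>B. \<exists>K. K-lipschitz_on {-B..B} P" "\<And>B. \<exists>K. K-lipschitz_on {-B..B} Q"
  shows "locally_lipschitz2 (\<lambda>a s. P a + Q s)"
  unfolding locally_lipschitz2_def
proof
  fix B :: real
  obtain KP KQ where "KP-lipschitz_on {-B..B} P" "KQ-lipschitz_on {-B..B} Q" using assms by blast
  then have "(max KP KQ)-lipschitz_on {-B..B} (\<lambda>a. P a + Q x)"
    "(max KP KQ)-lipschitz_on {-B..B} (\<lambda>s. P x + Q s)" for x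
    by (auto intro!: lipschitz_on_le[OF lipschitz_on_add[OF _ lipschitz_on_constant]]
        lipschitz_on_le[OF lipschitz_on_add[OF lipschitz_on_constant]])
  then show "\<exists>K. \<forall>x\<in>{-B..B}. K-lipschitz_on {-B..B} (\<lambda>a. P a + Q x) \<and> K-lipschitz_on {-B..B} (\<lambda>s. P x + Q s)"
    by blast
qed

lemma locally_lipschitz2_divide:
  assumes "locally_lipschitz2 F"
  shows "locally_lipschitz2 (\<lambda>a s. F a s / c)"
  unfolding locally_lipschitz2_def
proof
  fix B :: real
  obtain K where "\<forall>x\<in>{-B..B}. K-lipschitz_on {-B..B} (\<lambda>a. F a x) \<and> K-lipschitz_on {-B..B} (F x)"
    using assms unfolding locally_lipschitz2_def by blast
  then have "\<forall>x\<in>{-B..B}. (\<bar>1 / c\<bar> * K)-lipschitz_on {-B..B} (\<lambda>a. F a x / c) \<and>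
      (\<bar>1 / c\<bar> * K)-lipschitz_on {-B..B} (\<lambda>s. F x s / c)"
    using lipschitz_on_cmult_real[of K "{-B..B}" _ "1 / c"] by simp
  then show "\<exists>K. \<forall>x\<in>{-B..B}. K-lipschitz_on {-B..B} (\<lambda>a. F a x / c) \<and> K-lipschitz_on {-B..B} (\<lambda>s. F x s / c)"
    by blast
qed

lemma locally_lipschitz2_common_bound:
  assumes "locally_lipschitz2 F" "locally_lipschitz2 G" "bounded S"
  obtains K where "0 \<le> K"
    and "\<And>x. x \<in> S \<Longrightarrow> K-lipschitz_on S (\<lambda>a. F a x) \<and> K-lipschitz_on S (F x) \<and>
                     K-lipschitz_on S (\<lambda>a. G a x) \<and> K-lipschitz_on S (G x)"
proof -
  obtain B where "\<forall>x\<in>S. \<bar>x\<bar> \<le> B" using \<open>bounded S\<close> unfolding bounded_iff by auto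
  then have S: "S \<subseteq> {-B..B}" by (auto simp: abs_le_iff)
  obtain KF KG where
    KF: "\<And>x. x \<in> {-B..B} \<Longrightarrow> KF-lipschitz_on {-B..B} (\<lambda>a. F a x) \<and> KF-lipschitz_on {-B..B} (F x)" and
    KG: "\<And>x. x \<in> {-B..B} \<Longrightarrow> KG-lipschitz_on {-B..B} (\<lambda>a. G a x) \<and> KG-lipschitz_on {-B..B} (G x)"
    using assms(1,2) unfolding locally_lipschitz2_def by metis
  have "KF \<le> max 0 (max KF KG)" "KG \<le> max 0 (max KF KG)" by auto
  then show ?thesis
    using KF KG S lipschitz_on_mono by (intro that[of "max 0 (max KF KG)"]) (simp, blast)
qed

lemma ode_solution_imp_subsolution: "ode_solution F G t0 xa xs \<Longrightarrow> ode_subsolution F G t0 xa xs"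
  unfolding ode_solution_def ode_subsolution_def by blast

lemma ode_solution_imp_supersolution: "ode_solution F G t0 xa xs \<Longrightarrow> ode_supersolution F G t0 xa xs"
  unfolding ode_solution_def ode_supersolution_def by blast

lemma ode_subsolution_const: "0 \<le> F a s \<Longrightarrow> 0 \<le> G a s \<Longrightarrow> ode_subsolution F G t0 (\<lambda>_. a) (\<lambda>_. s)"
  unfolding ode_subsolution_def by (auto intro!: exI[of _ 0])

lemma ode_supersolution_const: "F a s \<le> 0 \<Longrightarrow> G a s \<le> 0 \<Longrightarrow> ode_supersolution F G t0 (\<lambda>_. a) (\<lambda>_. s)"
  unfolding ode_supersolution_def by (auto intro!: exI[of _ 0])

lemma ode_solution_later:
  assumes "ode_solution F G t0 xa xs" "t0 \<le> t1"
  shows "ode_solution F G t1 xa xs"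
  using assms continuous_on_subset[of "{t0..}" _ "{t1..}"] unfolding ode_solution_def by auto

lemma ode_solution_shift:
  assumes "ode_solution F G t0 xa xs" "0 \<le> h"
  shows "ode_solution F G t0 (\<lambda>t. xa (t + h)) (\<lambda>t. xs (t + h))"
proof -
  have "continuous_on {t0..} (\<lambda>t. x (t + h))" if "continuous_on {t0..} x" for x :: "real \<Rightarrow> real"
    by (rule continuous_on_compose2[OF that]) (use assms(2) in \<open>auto intro: continuous_intros\<close>)
  then show ?thesis using assms unfolding ode_solution_def by (auto simp flip: DERIV_shift)
qed

lemma has_derivative_within_imp_ode_solution:
  assumes "\<And>t. t0 \<le> t \<Longrightarrow> (xa has_real_derivative F (xa t) (xs t)) (at t within {t0..})"
    and "\<And>t. t0 \<le> t \<Longrightarrow> (xs has_real_derivative G (xa t) (xs t)) (at t within {t0..})"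
  shows "ode_solution F G t0 xa xs"
proof -
  have "at t within {t0..} = at t" if "t0 < t" for t
    using that by (intro at_within_interior) auto
  then show ?thesis
    using assms DERIV_continuous[OF assms(1)] DERIV_continuous[OF assms(2)]
    unfolding ode_solution_def continuous_on_eq_continuous_within by (metis atLeast_iff less_imp_le)
qed

section \<open>The comparison principle for cooperative planar systems\<close>

lemma has_real_derivative_pos_part_square:
  "((\<lambda>x::real. (max x 0)\<^sup>2) has_real_derivative 2 * max x 0) (at x)"
proof -
  consider "x < 0" | "x = 0" | "x > 0" by linarith
  then show ?thesis
  proof cases
    case 1
    have "((\<lambda>x. 0) has_real_derivative 2 * max x 0) (at x)" using 1 by simp
    then show ?thesis
      by (rule has_field_derivative_transform_within_open[where S="{..<0}"]) (use 1 in auto)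
  next
    case 2
    have "norm (((max (0 + h) 0)\<^sup>2 - (max 0 0)\<^sup>2) / h) \<le> \<bar>h\<bar>" for h :: real
      by (cases "h > 0") (simp_all add: power2_eq_square)
    then have "((\<lambda>h. ((max (0 + h) 0)\<^sup>2 - (max 0 0)\<^sup>2) / h) \<longlongrightarrow> 0) (at (0::real))"
      by (rule Lim_null_comparison[OF always_eventually[OF allI] tendsto_rabs_zero[OF tendsto_ident_at]])
    then show ?thesis using 2 by (simp add: DERIV_def)
  next
    case 3
    have "((\<lambda>x. x\<^sup>2) has_real_derivative 2 * max x 0) (at x)"
      using 3 by (auto intro!: derivative_eq_intros)
    then show ?thesis
      by (rule has_field_derivative_transform_within_open[where S="{0<..}"]) (use 3 in auto)
  qed
qed

lemma deriv_le_linear_imp_nonpos: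
  fixes g g' :: "real \<Rightarrow> real"
  assumes "a \<le> b" "continuous_on {a..b} g" "g a \<le> 0"
    and "\<And>t. a < t \<Longrightarrow> t < b \<Longrightarrow> (g has_real_derivative g' t) (at t) \<and> g' t \<le> C * g t"
  shows "g b \<le> 0"
proof -
  have "g b * exp (- C * b) \<le> g a * exp (- C * a)"
  proof (rule DERIV_nonpos_imp_decreasing_open[OF assms(1)])
    show "continuous_on {a..b} (\<lambda>t. g t * exp (- C * t))"
      using assms(2) by (intro continuous_intros)
    fix t assume "a < t" "t < b"
    with assms(4) have "(g has_real_derivative g' t) (at t)" "g' t - C * g t \<le> 0" by auto
    then show "\<exists>y. ((\<lambda>t. g t * exp (- C * t)) has_real_derivative y) (at t) \<and> y \<le> 0"
      by (auto intro!: derivative_eq_intros simp: algebra_simps mult_nonpos_nonneg)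
  qed
  also have "\<dots> \<le> 0" using assms(3) by (simp add: mult_nonpos_nonneg)
  finally show ?thesis by (simp add: mult_le_0_iff)
qed

lemma pos_part_mult_diff_le:
  fixes F :: "real \<Rightarrow> real \<Rightarrow> real"
  assumes "mono (F ya)" "K-lipschitz_on S (\<lambda>a. F a xs)" "K-lipschitz_on S (F ya)"
    and "xa \<in> S" "ya \<in> S" "xs \<in> S" "ys \<in> S"
  shows "max (xa - ya) 0 * (F xa xs - F ya ys) \<le> K * (max (xa - ya) 0)\<^sup>2 + K * (max (xa - ya) 0 * max (xs - ys) 0)"
proof (cases "xa \<le> ya")
  case False
  have K: "K \<ge> 0" using assms(2) by (rule lipschitz_on_nonneg)
  have "F xa xs - F ya xs \<le> K * (xa - ya)"
    using lipschitz_onD[OF assms(2,4,5)] False by (simp add: dist_real_def)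
  moreover have "F ya xs - F ya ys \<le> K * max (xs - ys) 0"
  proof (cases "xs \<le> ys")
    case True
    then show ?thesis using monoD[OF assms(1) True] K by simp
  next
    case False
    then show ?thesis using lipschitz_onD[OF assms(3,6,7)] by (simp add: dist_real_def)
  qed
  ultimately have "F xa xs - F ya ys \<le> K * max (xa - ya) 0 + K * max (xs - ys) 0"
    using False by simp
  from mult_left_mono[OF this, of "max (xa - ya) 0"] show ?thesis
    by (simp add: algebra_simps power2_eq_square)
qed simp

lemma cooperative_pos_part_estimate:
  assumes "cooperative F G" and "0 \<le> K"
    and K: "\<And>x. x \<in> S \<Longrightarrow> K-lipschitz_on S (\<lambda>a. F a x) \<and> K-lipschitz_on S (F x) \<and>
                            K-lipschitz_on S (\<lambda>a. G a x) \<and> K-lipschitz_on S (G x)"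
    and S: "xa \<in> S" "xs \<in> S" "ya \<in> S" "ys \<in> S"
    and "da \<le> F xa xs" "ds \<le> G xa xs" "F ya ys \<le> ea" "G ya ys \<le> es"
  shows "2 * max (xa - ya) 0 * (da - ea) + 2 * max (xs - ys) 0 * (ds - es)
           \<le> 4 * K * ((max (xa - ya) 0)\<^sup>2 + (max (xs - ys) 0)\<^sup>2)"
proof -
  define pa where "pa = max (xa - ya) 0"
  define ps where "ps = max (xs - ys) 0"
  have "pa * (da - ea) \<le> pa * (F xa xs - F ya ys)"
    using assms unfolding pa_def by (intro mult_left_mono) auto
  also have "\<dots> \<le> K * pa\<^sup>2 + K * (pa * ps)"
    unfolding pa_def ps_def using assms(1) K S
    by (intro pos_part_mult_diff_le) (auto simp: cooperative_def)
  finally have a: "pa * (da - ea) \<le> K * pa\<^sup>2 + K * (pa * ps)" .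
  have "ps * (ds - es) \<le> ps * (G xa xs - G ya ys)"
    using assms unfolding ps_def by (intro mult_left_mono) auto
  also have "\<dots> \<le> K * ps\<^sup>2 + K * (ps * pa)"
    unfolding pa_def ps_def using assms(1) K S
    by (intro pos_part_mult_diff_le[where F="\<lambda>s a. G a s"]) (auto simp: cooperative_def)
  finally have s: "ps * (ds - es) \<le> K * ps\<^sup>2 + K * (ps * pa)" .
  have "K * (2 * (pa * ps)) \<le> K * (pa\<^sup>2 + ps\<^sup>2)"
    using sum_squares_bound[of pa ps] \<open>0 \<le> K\<close> by (intro mult_left_mono) auto
  with a s show ?thesis unfolding pa_def[symmetric] ps_def[symmetric] by (simp add: algebra_simps)
qed

lemma cooperative_comparison:
  assumes coop: "cooperative F G" and lip: "locally_lipschitz2 F" "locally_lipschitz2 G"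
    and sub: "ode_subsolution F G t0 xa xs" and super: "ode_supersolution F G t0 ya ys"
    and init: "xa t0 \<le> ya t0" "xs t0 \<le> ys t0" and "t0 \<le> T"
  shows "xa T \<le> ya T \<and> xs T \<le> ys T"
proof -
  obtain da ds where dx: "\<And>t. t > t0 \<Longrightarrow> (xa has_real_derivative da t) (at t) \<and>
      (xs has_real_derivative ds t) (at t) \<and> da t \<le> F (xa t) (xs t) \<and> ds t \<le> G (xa t) (xs t)"
    using sub unfolding ode_subsolution_def by metis
  obtain ea es where dy: "\<And>t. t > t0 \<Longrightarrow> (ya has_real_derivative ea t) (at t) \<and>
      (ys has_real_derivative es t) (at t) \<and> F (ya t) (ys t) \<le> ea t \<and> G (ya t) (ys t) \<le> es t"
    using super unfolding ode_supersolution_def by metis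
  have cont: "continuous_on {t0..T} xa" "continuous_on {t0..T} xs"
    "continuous_on {t0..T} ya" "continuous_on {t0..T} ys"
    using sub super unfolding ode_subsolution_def ode_supersolution_def
    by (auto elim: continuous_on_subset)
  define S where "S = xa ` {t0..T} \<union> xs ` {t0..T} \<union> ya ` {t0..T} \<union> ys ` {t0..T}"
  have "bounded S"
    unfolding S_def using cont by (simp add: compact_imp_bounded compact_continuous_image)
  then obtain K where "0 \<le> K" and K: "\<And>x. x \<in> S \<Longrightarrow> K-lipschitz_on S (\<lambda>a. F a x) \<and>
      K-lipschitz_on S (F x) \<and> K-lipschitz_on S (\<lambda>a. G a x) \<and> K-lipschitz_on S (G x)"
    using locally_lipschitz2_common_bound[OF lip] by metis
  have S: "xa t \<in> S" "xs t \<in> S" "ya t \<in> S" "ys t \<in> S" if "t \<in> {t0..T}" for t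
    using that unfolding S_def by auto
  define pa where "pa t = max (xa t - ya t) 0" for t
  define ps where "ps t = max (xs t - ys t) 0" for t
  define g where "g t = (pa t)\<^sup>2 + (ps t)\<^sup>2" for t
  \<comment> \<open>g measures by how much x exceeds y; cooperativity and the Lipschitz bounds give g' \<le> 4 K g.\<close>
  have "g T \<le> 0"
  proof (rule deriv_le_linear_imp_nonpos[where g=g and a=t0 and C="4 * K"])
    show "continuous_on {t0..T} g"
      unfolding g_def pa_def ps_def using cont by (intro continuous_intros)
    show "g t0 \<le> 0" using init unfolding g_def pa_def ps_def by simp
    fix t assume t: "t0 < t" "t < T"
    show "(g has_real_derivative 2 * pa t * (da t - ea t) + 2 * ps t * (ds t - es t)) (at t) \<and>
        2 * pa t * (da t - ea t) + 2 * ps t * (ds t - es t) \<le> 4 * K * g t"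
      unfolding g_def pa_def ps_def using dx[OF t(1)] dy[OF t(1)] t S[of t]
      by (auto intro!: DERIV_add DERIV_chain2[OF has_real_derivative_pos_part_square] DERIV_diff
          cooperative_pos_part_estimate[OF coop \<open>0 \<le> K\<close> K])
  qed fact
  then have "pa T = 0 \<and> ps T = 0"
    unfolding g_def by (simp add: sum_power2_le_zero_iff)
  then show ?thesis unfolding pa_def ps_def by auto
qed

lemma cooperative_ode_solution_in_box:
  assumes "cooperative F G" "locally_lipschitz2 F" "locally_lipschitz2 G" "ode_solution F G t0 xa xs"
    and "0 \<le> F la ls" "0 \<le> G la ls" "F ua us \<le> 0" "G ua us \<le> 0"
    and "xa t0 \<in> {la..ua}" "xs t0 \<in> {ls..us}" "t0 \<le> T"
  shows "xa T \<in> {la..ua} \<and> xs T \<in> {ls..us}"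
  using cooperative_comparison[OF assms(1-3) ode_subsolution_const ode_solution_imp_supersolution[OF assms(4)]]
    cooperative_comparison[OF assms(1-3) ode_solution_imp_subsolution[OF assms(4)] ode_supersolution_const]
    assms(5-) by auto

lemma cooperative_ode_solution_stays_at_equilibrium:
  assumes "cooperative F G" "locally_lipschitz2 F" "locally_lipschitz2 G" "ode_solution F G t0 xa xs"
    and "t0 \<le> t1" "F (xa t1) (xs t1) = 0" "G (xa t1) (xs t1) = 0" "t1 \<le> T"
  shows "xa T = xa t1 \<and> xs T = xs t1"
  using cooperative_ode_solution_in_box[OF assms(1-3) ode_solution_later[OF assms(4,5)],
      of "xa t1" "xs t1" "xa t1" "xs t1" T] assms(6-)
  by auto

lemma cooperative_ode_solution_shift_le:
  assumes "cooperative F G" "locally_lipschitz2 F" "locally_lipschitz2 G" "ode_solution F G t0 xa xs"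
    and "t0 \<le> t1" "0 \<le> h" "t1 \<le> T"
  shows "xa t1 \<le> xa (t1 + h) \<Longrightarrow> xs t1 \<le> xs (t1 + h) \<Longrightarrow> xa T \<le> xa (T + h) \<and> xs T \<le> xs (T + h)"
    and "xa (t1 + h) \<le> xa t1 \<Longrightarrow> xs (t1 + h) \<le> xs t1 \<Longrightarrow> xa (T + h) \<le> xa T \<and> xs (T + h) \<le> xs T"
proof -
  have sol: "ode_solution F G t1 xa xs" "ode_solution F G t1 (\<lambda>t. xa (t + h)) (\<lambda>t. xs (t + h))"
    using ode_solution_later[OF assms(4,5)] ode_solution_shift assms(6) by auto
  show "xa t1 \<le> xa (t1 + h) \<Longrightarrow> xs t1 \<le> xs (t1 + h) \<Longrightarrow> xa T \<le> xa (T + h) \<and> xs T \<le> xs (T + h)"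
    using cooperative_comparison[OF assms(1-3) ode_solution_imp_subsolution[OF sol(1)]
        ode_solution_imp_supersolution[OF sol(2)] _ _ assms(7)] by simp
  show "xa (t1 + h) \<le> xa t1 \<Longrightarrow> xs (t1 + h) \<le> xs t1 \<Longrightarrow> xa (T + h) \<le> xa T \<and> xs (T + h) \<le> xs T"
    using cooperative_comparison[OF assms(1-3) ode_solution_imp_subsolution[OF sol(2)]
        ode_solution_imp_supersolution[OF sol(1)] _ _ assms(7)] by simp
qed

section \<open>Eventual monotonicity and convergence to an equilibrium\<close>

lemma small_shifts_imp_monotone_on:
  fixes f :: "real \<Rightarrow> 'a"
  assumes "reflp R" "transp R" "d > 0"
    and shift: "\<And>t h. t1 \<le> t \<Longrightarrow> 0 < h \<Longrightarrow> h < d \<Longrightarrow> R (f t) (f (t + h))"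
  shows "monotone_on {t1..} (\<le>) R f"
proof (rule monotone_onI)
  fix r s assume rs: "r \<in> {t1..}" "s \<in> {t1..}" "r \<le> s"
  obtain n :: nat where n: "(s - r) / d < n" using reals_Archimedean2 by blast
  then have "n > 0" using rs \<open>d > 0\<close> by (auto intro: gr0I simp: field_simps)
  define h where "h = (s - r) / n"
  have h: "0 \<le> h" "h < d" using n rs \<open>d > 0\<close> \<open>n > 0\<close> by (auto simp: h_def field_simps)
  have "R (f r) (f (r + k * h))" for k :: nat
  proof (induction k)
    case 0
    then show ?case using \<open>reflp R\<close> by (simp add: reflpD)
  next
    case (Suc k)
    have "R (f (r + k * h)) (f (r + Suc k * h))"
    proof (cases "h = 0")
      case False
      have "0 \<le> k * h" using h by simp
      then have "t1 \<le> r + k * h" using rs by simp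
      then show ?thesis using shift[of "r + k * h" h] h False by (simp add: algebra_simps)
    qed (use \<open>reflp R\<close> in \<open>simp add: reflpD\<close>)
    with Suc.IH show ?case using transpD[OF \<open>transp R\<close>] by blast
  qed
  from this[of n] show "R (f r) (f s)" using \<open>n > 0\<close> by (simp add: h_def)
qed

lemma deriv_nonneg_imp_mono_on:
  assumes "continuous_on {t0..} f" "\<And>t. t0 < t \<Longrightarrow> (f has_real_derivative f' t) (at t) \<and> 0 \<le> f' t"
  shows "mono_on {t0..} f"
proof (rule monotone_onI)
  fix r s :: real assume rs: "r \<in> {t0..}" "s \<in> {t0..}" "r \<le> s"
  show "f r \<le> f s"
  proof (rule DERIV_nonneg_imp_increasing_open[OF \<open>r \<le> s\<close>])
    show "continuous_on {r..s} f" using continuous_on_subset[OF assms(1)] rs by simp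
    show "\<exists>y. (f has_real_derivative y) (at x) \<and> 0 \<le> y" if "r < x" for x
      using assms(2)[of x] rs that by auto
  qed
qed

lemma deriv_nonpos_imp_antimono_on:
  assumes "continuous_on {t0..} f" "\<And>t. t0 < t \<Longrightarrow> (f has_real_derivative f' t) (at t) \<and> f' t \<le> 0"
  shows "antimono_on {t0..} f"
proof (rule monotone_onI)
  fix r s :: real assume rs: "r \<in> {t0..}" "s \<in> {t0..}" "r \<le> s"
  show "f s \<le> f r"
  proof (rule DERIV_nonpos_imp_decreasing_open[OF \<open>r \<le> s\<close>])
    show "continuous_on {r..s} f" using continuous_on_subset[OF assms(1)] rs by simp
    show "\<exists>y. (f has_real_derivative y) (at x) \<and> y \<le> 0" if "r < x" for x
      using assms(2)[of x] rs that by auto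
  qed
qed

lemma cooperative_ode_solution_mono_on_if_deriv_pos:
  assumes "cooperative F G" "locally_lipschitz2 F" "locally_lipschitz2 G" "ode_solution F G t0 xa xs"
    and "t0 < t1" "0 < F (xa t1) (xs t1)" "0 < G (xa t1) (xs t1)"
  shows "mono_on {t1..} xa \<and> mono_on {t1..} xs"
proof -
  have "(xa has_real_derivative F (xa t1) (xs t1)) (at t1)" "(xs has_real_derivative G (xa t1) (xs t1)) (at t1)"
    using assms(4,5) unfolding ode_solution_def by auto
  then obtain da ds where "0 < da" "\<And>h. 0 < h \<Longrightarrow> h < da \<Longrightarrow> xa t1 < xa (t1 + h)"
      and "0 < ds" "\<And>h. 0 < h \<Longrightarrow> h < ds \<Longrightarrow> xs t1 < xs (t1 + h)"
    using DERIV_pos_inc_right assms(6,7) by metis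
  then have shifts: "xa t \<le> xa (t + h) \<and> xs t \<le> xs (t + h)" if "t1 \<le> t" "0 < h" "h < min da ds" for t h
    using cooperative_ode_solution_shift_le(1)[OF assms(1-4) less_imp_le[OF assms(5)] _ that(1)] that
    by (simp add: less_imp_le)
  note mono = small_shifts_imp_monotone_on[OF reflp_on_le transp_on_le, of "min da ds" t1]
  show ?thesis using mono[of xa] mono[of xs] shifts \<open>0 < da\<close> \<open>0 < ds\<close> by auto
qed

lemma cooperative_ode_solution_antimono_on_if_deriv_neg:
  assumes "cooperative F G" "locally_lipschitz2 F" "locally_lipschitz2 G" "ode_solution F G t0 xa xs"
    and "t0 < t1" "F (xa t1) (xs t1) < 0" "G (xa t1) (xs t1) < 0"
  shows "antimono_on {t1..} xa \<and> antimono_on {t1..} xs"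
proof -
  have "(xa has_real_derivative F (xa t1) (xs t1)) (at t1)" "(xs has_real_derivative G (xa t1) (xs t1)) (at t1)"
    using assms(4,5) unfolding ode_solution_def by auto
  then obtain da ds where "0 < da" "\<And>h. 0 < h \<Longrightarrow> h < da \<Longrightarrow> xa (t1 + h) < xa t1"
      and "0 < ds" "\<And>h. 0 < h \<Longrightarrow> h < ds \<Longrightarrow> xs (t1 + h) < xs t1"
    using DERIV_neg_dec_right assms(6,7) by metis
  then have shifts: "xa (t + h) \<le> xa t \<and> xs (t + h) \<le> xs t" if "t1 \<le> t" "0 < h" "h < min da ds" for t h
    using cooperative_ode_solution_shift_le(2)[OF assms(1-4) less_imp_le[OF assms(5)] _ that(1)] that
    by (simp add: less_imp_le)
  note antimono = small_shifts_imp_monotone_on[OF reflp_on_ge transp_on_ge, of "min da ds" t1]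
  show ?thesis using antimono[of xa] antimono[of xs] shifts \<open>0 < da\<close> \<open>0 < ds\<close> by auto
qed

lemma continuous_on_opposite_signs:
  fixes u v :: "real \<Rightarrow> real"
  assumes "connected S" "continuous_on S u" "continuous_on S v"
    and signs: "\<And>t. t \<in> S \<Longrightarrow> \<not> (0 < u t \<and> 0 < v t) \<and> \<not> (u t < 0 \<and> v t < 0) \<and> \<not> (u t = 0 \<and> v t = 0)"
  shows "(\<forall>t\<in>S. 0 \<le> u t \<and> v t \<le> 0) \<or> (\<forall>t\<in>S. u t \<le> 0 \<and> 0 \<le> v t)"
proof -
  have ne: "u t - v t \<noteq> 0" if "t \<in> S" for t
    using signs[OF that] by linarith
  have conn: "connected ((\<lambda>t. u t - v t) ` S)"
    using assms(1-3) by (intro connected_continuous_image continuous_intros)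
  have "(\<forall>t\<in>S. 0 < u t - v t) \<or> (\<forall>t\<in>S. u t - v t < 0)"
  proof (rule ccontr)
    assume "\<not> ?thesis"
    then obtain p q where "p \<in> S" "q \<in> S" "\<not> 0 < u p - v p" "\<not> u q - v q < 0"
      by blast
    with ne have pq: "p \<in> S" "q \<in> S" "u p - v p < 0" "0 < u q - v q"
      by (meson less_linear)+
    then have "0 \<in> (\<lambda>t. u t - v t) ` S"
      using conn[unfolded connected_iff_interval, rule_format, of "u p - v p" "u q - v q" 0] by auto
    then show False using ne by auto
  qed
  moreover have "0 \<le> u t \<and> v t \<le> 0" if "t \<in> S" "0 < u t - v t" for t
    using signs[OF that(1)] that(2) by auto
  moreover have "u t \<le> 0 \<and> 0 \<le> v t" if "t \<in> S" "u t - v t < 0" for t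
    using signs[OF that(1)] that(2) by auto
  ultimately show ?thesis by blast
qed

lemma ode_solution_monotone_if_deriv_signs_differ:
  assumes "continuous_on UNIV (\<lambda>(a, s). F a s)" "continuous_on UNIV (\<lambda>(a, s). G a s)"
    and sol: "ode_solution F G t0 xa xs"
    and signs: "\<And>t. t0 < t \<Longrightarrow> \<not> (0 < F (xa t) (xs t) \<and> 0 < G (xa t) (xs t)) \<and>
      \<not> (F (xa t) (xs t) < 0 \<and> G (xa t) (xs t) < 0) \<and> \<not> (F (xa t) (xs t) = 0 \<and> G (xa t) (xs t) = 0)"
  shows "(mono_on {t0..} xa \<and> antimono_on {t0..} xs) \<or> (antimono_on {t0..} xa \<and> mono_on {t0..} xs)"
proof -
  define u where "u t = F (xa t) (xs t)" for t
  define v where "v t = G (xa t) (xs t)" for t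
  have "{t0<..} \<subseteq> {t0..}" by auto
  then have "continuous_on {t0<..} xa" "continuous_on {t0<..} xs"
    using sol continuous_on_subset unfolding ode_solution_def by blast+
  then have "continuous_on {t0<..} (\<lambda>t. (xa t, xs t))"
    by (rule continuous_on_Pair)
  then have "continuous_on {t0<..} u" "continuous_on {t0<..} v"
    unfolding u_def v_def
    using continuous_on_compose2[OF assms(1), of _ "\<lambda>t. (xa t, xs t)"]
      continuous_on_compose2[OF assms(2), of _ "\<lambda>t. (xa t, xs t)"] by auto
  then have "(\<forall>t\<in>{t0<..}. 0 \<le> u t \<and> v t \<le> 0) \<or> (\<forall>t\<in>{t0<..}. u t \<le> 0 \<and> 0 \<le> v t)"
    using signs unfolding u_def v_def by (intro continuous_on_opposite_signs) auto
  moreover have cont: "continuous_on {t0..} xa" "continuous_on {t0..} xs"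
    and deriv: "\<And>t. t0 < t \<Longrightarrow> (xa has_real_derivative u t) (at t) \<and> (xs has_real_derivative v t) (at t)"
    using sol unfolding ode_solution_def u_def v_def by auto
  ultimately show ?thesis
  proof (elim disjE)
    assume signs: "\<forall>t\<in>{t0<..}. 0 \<le> u t \<and> v t \<le> 0"
    have "mono_on {t0..} xa" by (rule deriv_nonneg_imp_mono_on[OF cont(1)]) (use deriv signs in auto)
    moreover have "antimono_on {t0..} xs" by (rule deriv_nonpos_imp_antimono_on[OF cont(2)]) (use deriv signs in auto)
    ultimately show ?thesis by blast
  next
    assume signs: "\<forall>t\<in>{t0<..}. u t \<le> 0 \<and> 0 \<le> v t"
    have "antimono_on {t0..} xa" by (rule deriv_nonpos_imp_antimono_on[OF cont(1)]) (use deriv signs in auto)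
    moreover have "mono_on {t0..} xs" by (rule deriv_nonneg_imp_mono_on[OF cont(2)]) (use deriv signs in auto)
    ultimately show ?thesis by blast
  qed
qed

lemma cooperative_ode_solution_eventually_monotone:
  assumes "cooperative F G" "locally_lipschitz2 F" "locally_lipschitz2 G"
    and "continuous_on UNIV (\<lambda>(a, s). F a s)" "continuous_on UNIV (\<lambda>(a, s). G a s)"
    and sol: "ode_solution F G t0 xa xs"
  shows "\<exists>t1\<ge>t0. (mono_on {t1..} xa \<or> antimono_on {t1..} xa) \<and> (mono_on {t1..} xs \<or> antimono_on {t1..} xs)"
proof -
  define u where "u t = F (xa t) (xs t)" for t
  define v where "v t = G (xa t) (xs t)" for t
  consider (up) t1 where "t0 < t1" "0 < u t1" "0 < v t1"
    | (down) t1 where "t0 < t1" "u t1 < 0" "v t1 < 0"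
    | (rest) t1 where "t0 < t1" "u t1 = 0" "v t1 = 0"
    | (mixed) "\<And>t. t0 < t \<Longrightarrow> \<not> (0 < u t \<and> 0 < v t) \<and> \<not> (u t < 0 \<and> v t < 0) \<and> \<not> (u t = 0 \<and> v t = 0)"
    by blast
  then show ?thesis
  proof cases
    case up
    then have "mono_on {t1..} xa \<and> mono_on {t1..} xs"
      unfolding u_def v_def by (rule cooperative_ode_solution_mono_on_if_deriv_pos[OF assms(1-3) sol])
    with \<open>t0 < t1\<close> show ?thesis by (intro exI[of _ t1]) simp
  next
    case down
    then have "antimono_on {t1..} xa \<and> antimono_on {t1..} xs"
      unfolding u_def v_def by (rule cooperative_ode_solution_antimono_on_if_deriv_neg[OF assms(1-3) sol])
    with \<open>t0 < t1\<close> show ?thesis by (intro exI[of _ t1]) simp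
  next
    case rest
    have const: "xa t = xa t1 \<and> xs t = xs t1" if "t1 \<le> t" for t
      using cooperative_ode_solution_stays_at_equilibrium[OF assms(1-3) sol less_imp_le[OF rest(1)]
          rest(2,3)[unfolded u_def v_def] that] .
    have "mono_on {t1..} xa \<and> mono_on {t1..} xs"
    proof (intro conjI monotone_onI)
      show "xa r \<le> xa r'" "xs r \<le> xs r'" if "r \<in> {t1..}" "r' \<in> {t1..}" for r r'
        using const[of r] const[of r'] that by simp_all
    qed
    with \<open>t0 < t1\<close> show ?thesis by (intro exI[of _ t1]) simp
  next
    case mixed
    then have "(mono_on {t0..} xa \<and> antimono_on {t0..} xs) \<or> (antimono_on {t0..} xa \<and> mono_on {t0..} xs)"
      unfolding u_def v_def by (rule ode_solution_monotone_if_deriv_signs_differ[OF assms(4,5) sol])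
    then show ?thesis by blast
  qed
qed

lemma mono_on_tendsto_SUP_at_top:
  fixes f :: "real \<Rightarrow> real"
  assumes "mono_on {t1..} f" "bdd_above (f ` {t1..})"
  shows "(f \<longlongrightarrow> (SUP t\<in>{t1..}. f t)) at_top"
proof (rule order_tendstoI)
  fix y assume "y < (SUP t\<in>{t1..}. f t)"
  then obtain t where "t1 \<le> t" "y < f t" using less_cSUP_iff[OF _ assms(2)] by auto
  then have "y < f x" if "t \<le> x" for x
    using monotone_onD[OF assms(1), of t x] that by auto
  with eventually_ge_at_top[of t] show "\<forall>\<^sub>F x in at_top. y < f x"
    by (rule eventually_mono)
next
  fix y assume "(SUP t\<in>{t1..}. f t) < y"
  then have "f x < y" if "t1 \<le> x" for x
    using cSUP_upper[OF _ assms(2), of x] that by auto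
  with eventually_ge_at_top[of t1] show "\<forall>\<^sub>F x in at_top. f x < y"
    by (rule eventually_mono)
qed

lemma monotone_bounded_convergent_at_top:
  fixes f :: "real \<Rightarrow> real"
  assumes "mono_on {t1..} f \<or> antimono_on {t1..} f" "bounded (f ` {t1..})"
  shows "\<exists>l. (f \<longlongrightarrow> l) at_top"
  using assms(1)
proof
  assume "mono_on {t1..} f"
  then show ?thesis
    using mono_on_tendsto_SUP_at_top[OF _ bounded_imp_bdd_above[OF assms(2)]] by blast
next
  assume "antimono_on {t1..} f"
  then have "mono_on {t1..} (\<lambda>t. - f t)" by (auto simp: monotone_on_def)
  moreover have "bounded ((\<lambda>t. - f t) ` {t1..})"
    using assms(2) bounded_uminus[of "f ` {t1..}"] by (simp add: image_image)
  ultimately have "((\<lambda>t. - f t) \<longlongrightarrow> (SUP t\<in>{t1..}. - f t)) at_top"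
    by (intro mono_on_tendsto_SUP_at_top bounded_imp_bdd_above)
  then have "(f \<longlongrightarrow> - (SUP t\<in>{t1..}. - f t)) at_top"
    using tendsto_minus by fastforce
  then show ?thesis by blast
qed

lemma derivative_limit_at_top_eq_0:
  fixes f f' :: "real \<Rightarrow> real"
  assumes deriv: "\<And>t. t0 < t \<Longrightarrow> (f has_real_derivative f' t) (at t)"
    and lim: "(f \<longlongrightarrow> a) at_top" "(f' \<longlongrightarrow> c) at_top"
  shows "c = 0"
proof -
  have "\<exists>z. t < z \<and> f (t + 1) - f t = f' z" if "t0 < t" for t
  proof -
    have "(f has_real_derivative f' x) (at x)" if "t \<le> x" for x
      by (rule deriv) (use \<open>t0 < t\<close> that in linarith)
    then show ?thesis using MVT2[of t "t + 1" f f'] by auto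
  qed
  then obtain z where z: "\<And>t. t0 < t \<Longrightarrow> t < z t \<and> f (t + 1) - f t = f' (z t)"
    by metis
  have ev: "\<forall>\<^sub>F t in at_top. t \<le> z t \<and> f (t + 1) - f t = f' (z t)"
    using eventually_gt_at_top[of t0] by (rule eventually_mono) (use z less_imp_le in blast)
  have "\<forall>\<^sub>F t in at_top. t \<le> z t"
    using ev by (rule eventually_mono) blast
  then have "filterlim z at_top at_top"
    by (rule filterlim_at_top_mono[OF filterlim_ident])
  with lim(2) have "((\<lambda>t. f' (z t)) \<longlongrightarrow> c) at_top"
    by (rule filterlim_compose)
  moreover have "\<forall>\<^sub>F t in at_top. f (t + 1) - f t = f' (z t)"
    using ev by (rule eventually_mono) blast
  ultimately have diff_c: "((\<lambda>t. f (t + 1) - f t) \<longlongrightarrow> c) at_top"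
    by (simp add: tendsto_cong)
  have "filterlim (\<lambda>t::real. t + 1) at_top at_top"
    by (rule filterlim_at_top_mono[OF filterlim_ident]) simp
  then have "((\<lambda>t. f (t + 1) - f t) \<longlongrightarrow> a - a) at_top"
    by (intro tendsto_diff filterlim_compose[OF lim(1)] lim(1))
  from tendsto_unique[OF trivial_limit_at_top_linorder diff_c this] show ?thesis
    by simp
qed

lemma cooperative_ode_solution_tendsto_equilibrium:
  assumes "cooperative F G" "locally_lipschitz2 F" "locally_lipschitz2 G"
    and contF: "continuous_on UNIV (\<lambda>(a, s). F a s)" and contG: "continuous_on UNIV (\<lambda>(a, s). G a s)"
    and sol: "ode_solution F G t0 xa xs" and "bounded (xa ` {t0..})" "bounded (xs ` {t0..})"
  shows "\<exists>a s. F a s = 0 \<and> G a s = 0 \<and> (xa \<longlongrightarrow> a) at_top \<and> (xs \<longlongrightarrow> s) at_top"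
proof -
  obtain t1 where "t0 \<le> t1" and mono: "mono_on {t1..} xa \<or> antimono_on {t1..} xa"
      "mono_on {t1..} xs \<or> antimono_on {t1..} xs"
    using cooperative_ode_solution_eventually_monotone[OF assms(1-6)] by blast
  moreover have "bounded (xa ` {t1..})" "bounded (xs ` {t1..})"
    using bounded_subset[OF assms(7)] bounded_subset[OF assms(8)] \<open>t0 \<le> t1\<close> by (simp_all add: image_mono)
  ultimately obtain a s where lim: "(xa \<longlongrightarrow> a) at_top" "(xs \<longlongrightarrow> s) at_top"
    using monotone_bounded_convergent_at_top by metis
  have Flim: "((\<lambda>t. F (xa t) (xs t)) \<longlongrightarrow> F a s) at_top"
    and Glim: "((\<lambda>t. G (xa t) (xs t)) \<longlongrightarrow> G a s) at_top"
    using isCont_tendsto_compose[OF _ tendsto_Pair[OF lim], of "\<lambda>(a, s). F a s"]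
      isCont_tendsto_compose[OF _ tendsto_Pair[OF lim], of "\<lambda>(a, s). G a s"] contF contG
    by (simp_all add: continuous_on_eq_continuous_at)
  have dxa: "(xa has_real_derivative F (xa t) (xs t)) (at t)"
    and dxs: "(xs has_real_derivative G (xa t) (xs t)) (at t)" if "t0 < t" for t
    using sol that unfolding ode_solution_def by auto
  have "F a s = 0" by (rule derivative_limit_at_top_eq_0[OF dxa lim(1) Flim])
  moreover have "G a s = 0" by (rule derivative_limit_at_top_eq_0[OF dxs lim(2) Glim])
  ultimately show ?thesis using lim by blast
qed

section \<open>The two-layer radiative model\<close>

lemma abs_cube_mult_eq_pow4: "0 \<le> x \<Longrightarrow> \<bar>x\<bar>^3 * x = (x::real)^4"
  by (simp add: power3_eq_cube power4_eq_xxxx)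

lemma abs_cube_mult_eq_neg_pow4: "x \<le> 0 \<Longrightarrow> \<bar>x\<bar>^3 * x = - ((- x::real)^4)"
  by (simp add: power3_eq_cube power4_eq_xxxx)

lemma mono_abs_cube_mult: "mono (\<lambda>x::real. \<bar>x\<bar>^3 * x)"
proof (rule monoI)
  fix a b :: real assume "a \<le> b"
  consider "0 \<le> a" | "a < 0" "0 \<le> b" | "b < 0" by linarith
  then show "\<bar>a\<bar>^3 * a \<le> \<bar>b\<bar>^3 * b"
  proof cases
    case 1
    then show ?thesis using \<open>a \<le> b\<close> power_mono[of a b 4] by (simp add: power3_eq_cube power4_eq_xxxx)
  next
    case 2
    have "0 \<le> (- a)^4" "0 \<le> b^4" by simp_all
    then show ?thesis using 2 by (simp only: abs_cube_mult_eq_pow4 abs_cube_mult_eq_neg_pow4)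
  next
    case 3
    then show ?thesis using \<open>a \<le> b\<close> power_mono[of "-b" "-a" 4] by (simp add: power3_eq_cube power4_eq_xxxx)
  qed
qed

lemma pow4_diff_le:
  fixes a b B :: real
  assumes "0 \<le> a" "a \<le> b" "b \<le> B"
  shows "b^4 - a^4 \<le> 4 * B^3 * (b - a)"
proof -
  have "b^4 - a^4 = (b - a) * ((b + a) * (b^2 + a^2))"
    by (simp add: algebra_simps power2_eq_square power4_eq_xxxx)
  also have "\<dots> \<le> (b - a) * ((B + B) * (B^2 + B^2))"
    using assms by (intro mult_left_mono mult_mono add_mono power_mono) auto
  finally show ?thesis by (simp add: algebra_simps power2_eq_square power3_eq_cube)
qed

lemma abs_cube_mult_diff_le:
  fixes a b B :: real
  assumes "\<bar>a\<bar> \<le> B" "\<bar>b\<bar> \<le> B" "a \<le> b"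
  shows "\<bar>b\<bar>^3 * b - \<bar>a\<bar>^3 * a \<le> 4 * B^3 * (b - a)"
proof -
  consider "0 \<le> a" | "a < 0" "0 \<le> b" | "b < 0" by linarith
  then show ?thesis
  proof cases
    case 1
    then show ?thesis using pow4_diff_le[of a b B] assms by (simp add: power3_eq_cube power4_eq_xxxx)
  next
    case 2
    have "b^3 * b \<le> B^3 * b" "(-a)^3 * (-a) \<le> B^3 * (-a)"
      using 2 assms by (intro mult_right_mono power_mono; simp)+
    moreover have "0 \<le> B^3 * (b - a)" using assms by simp
    ultimately show ?thesis using 2
      by (simp only: abs_cube_mult_eq_pow4 abs_cube_mult_eq_neg_pow4 less_imp_le)
        (simp add: power3_eq_cube power4_eq_xxxx algebra_simps)
  next
    case 3
    then show ?thesis using pow4_diff_le[of "-b" "-a" B] assms by (simp add: power3_eq_cube power4_eq_xxxx)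
  qed
qed

lemma lipschitz_on_abs_cube_mult: "(4 * \<bar>B\<bar>^3)-lipschitz_on {-B..B} (\<lambda>x::real. \<bar>x\<bar>^3 * x)"
proof (rule lipschitz_on_leI)
  fix x y :: real assume "x \<in> {-B..B}" "y \<in> {-B..B}" "x \<le> y"
  then have "\<bar>y\<bar>^3 * y - \<bar>x\<bar>^3 * x \<le> 4 * \<bar>B\<bar>^3 * (y - x)"
    by (intro abs_cube_mult_diff_le) auto
  moreover have "\<bar>x\<bar>^3 * x \<le> \<bar>y\<bar>^3 * y" using monoD[OF mono_abs_cube_mult \<open>x \<le> y\<close>] .
  ultimately show "dist (\<bar>x\<bar>^3 * x) (\<bar>y\<bar>^3 * y) \<le> 4 * \<bar>B\<bar>^3 * dist x y"
    using \<open>x \<le> y\<close> by (simp add: dist_real_def)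
qed simp

lemma mono_linear_plus_abs_cube_mult:
  "0 \<le> c \<Longrightarrow> 0 \<le> d \<Longrightarrow> mono (\<lambda>x::real. c * x + d * (\<bar>x\<bar>^3 * x))"
  using monoD[OF mono_abs_cube_mult] by (intro monoI add_mono mult_left_mono) auto

lemma lipschitz_on_UNIV_bound: "L-lipschitz_on UNIV f \<Longrightarrow> f x \<le> \<bar>f 0\<bar> + L * \<bar>x\<bar>"
  using lipschitz_onD[of L UNIV f x 0] by (simp add: dist_real_def)

lemma ex_quartic_dominates_linear:
  fixes A B c X :: real
  assumes "0 < c" "0 \<le> A" "0 \<le> B"
  shows "\<exists>m. X \<le> m \<and> 1 \<le> m \<and> A * m + B \<le> c * m^4"
proof -
  define m where "m = max 1 (max X ((A + B) / c))"
  have "(A + B) / c \<le> m" by (simp add: m_def)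
  then have m: "1 \<le> m" "X \<le> m" "A + B \<le> c * m"
    using assms(1) by (auto simp: m_def pos_divide_le_eq mult.commute)
  have "A * m + B \<le> (A + B) * m"
    using mult_left_mono[OF m(1) assms(3)] by (simp add: algebra_simps)
  also have "\<dots> \<le> (c * m) * m" using m by (intro mult_right_mono) auto
  also have "\<dots> \<le> c * m^4"
    using power_increasing[of 2 4 m] m(1) assms(1) by (simp add: power2_eq_square mult.assoc)
  finally show ?thesis using m by blast
qed

lemma rhs_a_separable:
  "rhs_a lam q sB ea beta a s = (q * beta a - lam * a - 2 * ea * sB * (\<bar>a\<bar>^3 * a)) + (lam * s + ea * sB * (\<bar>s\<bar>^3 * s))"
  unfolding rhs_a_def by (simp add: algebra_simps)

lemma rhs_s_separable:
  "rhs_s lam q sB ea beta a s = (lam * a + ea * sB * (\<bar>a\<bar>^3 * a)) + (q * beta s - lam * s - sB * (\<bar>s\<bar>^3 * s))"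
  unfolding rhs_s_def by (simp add: algebra_simps)

lemma cooperative_rhs:
  assumes "0 \<le> lam" "0 \<le> sB" "0 \<le> ea"
  shows "cooperative (rhs_a lam q sB ea betaa) (rhs_s lam q sB ea betas)"
  unfolding rhs_a_separable[abs_def] rhs_s_separable[abs_def]
  using assms by (intro cooperative_separable mono_linear_plus_abs_cube_mult) auto

lemma locally_lipschitz2_rhs_a:
  assumes "L-lipschitz_on UNIV beta"
  shows "locally_lipschitz2 (rhs_a lam q sB ea beta)"
  unfolding rhs_a_separable[abs_def]
  by (intro locally_lipschitz2_separable; rule exI, (rule lipschitz_on_add lipschitz_on_diff
      lipschitz_on_cmult_real lipschitz_on_id lipschitz_on_abs_cube_mult
      lipschitz_on_subset[OF assms subset_UNIV])+)

lemma locally_lipschitz2_rhs_s: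
  assumes "L-lipschitz_on UNIV beta"
  shows "locally_lipschitz2 (rhs_s lam q sB ea beta)"
  unfolding rhs_s_separable[abs_def]
  by (intro locally_lipschitz2_separable; rule exI, (rule lipschitz_on_add lipschitz_on_diff
      lipschitz_on_cmult_real lipschitz_on_id lipschitz_on_abs_cube_mult
      lipschitz_on_subset[OF assms subset_UNIV])+)

lemma continuous_on_rhs_a:
  assumes "continuous_on UNIV beta"
  shows "continuous_on UNIV (\<lambda>(a, s). rhs_a lam q sB ea beta a s / c)"
  unfolding rhs_a_def case_prod_unfold divide_inverse
  by (intro continuous_intros continuous_on_compose2[OF assms]) auto

lemma continuous_on_rhs_s:
  assumes "continuous_on UNIV beta"
  shows "continuous_on UNIV (\<lambda>(a, s). rhs_s lam q sB ea beta a s / c)"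
  unfolding rhs_s_def case_prod_unfold divide_inverse
  by (intro continuous_intros continuous_on_compose2[OF assms]) auto

lemma rhs_nonpos_at_large_corner:
  fixes betaa betas :: "real \<Rightarrow> real"
  assumes "0 \<le> lam" "0 \<le> q" "0 < sB" "0 < ea" "ea < 2"
    and La: "La-lipschitz_on UNIV betaa" and Ls: "Ls-lipschitz_on UNIV betas"
  shows "\<exists>ua us. X \<le> ua \<and> Y \<le> us \<and> rhs_a lam q sB ea betaa ua us \<le> 0 \<and> rhs_s lam q sB ea betas ua us \<le> 0"
proof -
  define k where "k = root 4 ((ea + 2) / 2)"
  \<comment> \<open>As ea < k^4 < 2, the quartic terms at the corner (m, k m) are negative in both equations.\<close>
  have k: "0 < k" "k^4 = (ea + 2) / 2"
    using assms unfolding k_def by (auto intro: real_root_gt_zero real_root_pow_pos2)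
  define c where "c = min (ea * sB * (2 - k^4)) (sB * (k^4 - ea))"
  have "0 < c" using assms k unfolding c_def by auto
  define A where "A = lam * k + q * La + lam + q * Ls * k"
  define B where "B = q * \<bar>betaa 0\<bar> + q * \<bar>betas 0\<bar>"
  have "0 \<le> La" "0 \<le> Ls" using La Ls by (auto intro: lipschitz_on_nonneg)
  then have "0 \<le> A" "0 \<le> B" using assms k unfolding A_def B_def by auto
  then obtain m where m: "max X (Y / k) \<le> m" "1 \<le> m" "A * m + B \<le> c * m^4"
    using ex_quartic_dominates_linear[OF \<open>0 < c\<close>] by blast
  have pow4: "\<bar>m\<bar>^3 * m = m^4" "\<bar>k * m\<bar>^3 * (k * m) = k^4 * m^4"
    using abs_cube_mult_eq_pow4[of m] abs_cube_mult_eq_pow4[of "k * m"] m(2) k(1)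
    by (simp_all only: power_mult_distrib) simp_all
  have "q * betaa m \<le> q * \<bar>betaa 0\<bar> + q * La * m" "q * betas (k * m) \<le> q * \<bar>betas 0\<bar> + q * Ls * k * m"
    using mult_left_mono[OF lipschitz_on_UNIV_bound[OF La, of m] \<open>0 \<le> q\<close>]
      mult_left_mono[OF lipschitz_on_UNIV_bound[OF Ls, of "k * m"] \<open>0 \<le> q\<close>] m(2) k(1)
    by (simp_all add: algebra_simps abs_mult)
  moreover have "c * m^4 \<le> ea * sB * (2 - k^4) * m^4" "c * m^4 \<le> sB * (k^4 - ea) * m^4"
    unfolding c_def by (simp_all add: mult_right_mono)
  moreover have "lam * (k - 1) * m \<le> lam * k * m" "lam * (1 - k) * m \<le> lam * m"
    using assms(1) m(2) k(1) by (simp_all add: algebra_simps)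
  moreover have "0 \<le> lam * m" "0 \<le> lam * k * m" "0 \<le> q * La * m" "0 \<le> q * Ls * k * m"
    "0 \<le> q * \<bar>betaa 0\<bar>" "0 \<le> q * \<bar>betas 0\<bar>"
    using assms m(2) k(1) \<open>0 \<le> La\<close> \<open>0 \<le> Ls\<close> by simp_all
  moreover have "A * m + B =
      lam * k * m + q * La * m + lam * m + q * Ls * k * m + q * \<bar>betaa 0\<bar> + q * \<bar>betas 0\<bar>"
    unfolding A_def B_def by (simp add: algebra_simps)
  moreover have "rhs_a lam q sB ea betaa m (k * m) = lam * (k - 1) * m + q * betaa m - ea * sB * (2 - k^4) * m^4"
    "rhs_s lam q sB ea betas m (k * m) = lam * (1 - k) * m + q * betas (k * m) - sB * (k^4 - ea) * m^4"
    unfolding rhs_a_separable rhs_s_separable pow4 by (simp_all add: algebra_simps)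
  ultimately have "rhs_a lam q sB ea betaa m (k * m) \<le> 0" "rhs_s lam q sB ea betas m (k * m) \<le> 0"
    using m(3) by linarith+
  moreover have "Y \<le> k * m" using m(1) k(1) by (simp add: pos_divide_le_eq mult.commute)
  ultimately show ?thesis using m(1) by auto
qed

theorem proposition2p2:
  fixes gamma_a gamma_s lam q sB ea Ta0 Ts0 :: real
    and betaa betas Ta Ts :: "real \<Rightarrow> real"
  assumes "gamma_a > 0" and "gamma_s > 0" and "lam \<ge> 0" and "q > 0" and "sB > 0"
    and "0 < ea" and "ea < 2"
    and "\<exists>L. L-lipschitz_on UNIV betaa" and "\<exists>L. L-lipschitz_on UNIV betas"
    and "\<And>x. betaa x \<ge> 0" and "\<And>x. betas x > 0"
    and "Ta0 \<ge> 0" and "Ts0 \<ge> 0"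
    and "Ta 0 = Ta0" and "Ts 0 = Ts0"
    and "\<And>t. t \<ge> 0 \<Longrightarrow>
           (Ta has_real_derivative (rhs_a lam q sB ea betaa (Ta t) (Ts t) / gamma_a)) (at t within {0..})"
    and "\<And>t. t \<ge> 0 \<Longrightarrow>
           (Ts has_real_derivative (rhs_s lam q sB ea betas (Ta t) (Ts t) / gamma_s)) (at t within {0..})"
  shows "\<exists>a s. rhs_a lam q sB ea betaa a s = 0 \<and> rhs_s lam q sB ea betas a s = 0 \<and>
               (Ta \<longlongrightarrow> a) at_top \<and> (Ts \<longlongrightarrow> s) at_top"
proof -
  obtain La Ls where La: "La-lipschitz_on UNIV betaa" and Ls: "Ls-lipschitz_on UNIV betas"
    using assms(8,9) by blast
  define FA where "FA a s = rhs_a lam q sB ea betaa a s / gamma_a" for a s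
  define FS where "FS a s = rhs_s lam q sB ea betas a s / gamma_s" for a s
  have coop: "cooperative FA FS"
    unfolding FA_def[abs_def] FS_def[abs_def] using assms(1-6)
    by (intro cooperative_divide cooperative_rhs) auto
  have lip: "locally_lipschitz2 FA" "locally_lipschitz2 FS"
    unfolding FA_def[abs_def] FS_def[abs_def]
    by (intro locally_lipschitz2_divide locally_lipschitz2_rhs_a[OF La] locally_lipschitz2_rhs_s[OF Ls])+
  have cont: "continuous_on UNIV (\<lambda>(a, s). FA a s)" "continuous_on UNIV (\<lambda>(a, s). FS a s)"
    unfolding FA_def FS_def
    by (intro continuous_on_rhs_a continuous_on_rhs_s lipschitz_on_continuous_on[OF La]
        lipschitz_on_continuous_on[OF Ls])+
  have sol: "ode_solution FA FS 0 Ta Ts"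
    unfolding FA_def FS_def using assms(16,17) by (rule has_derivative_within_imp_ode_solution)
  obtain ua us where "Ta0 \<le> ua" "Ts0 \<le> us" and corner: "FA ua us \<le> 0" "FS ua us \<le> 0"
    using rhs_nonpos_at_large_corner[OF assms(3) _ assms(5-7) La Ls] assms(1,2,4)
    unfolding FA_def FS_def by (meson divide_nonpos_pos less_imp_le)
  then have init: "Ta 0 \<in> {0..ua}" "Ts 0 \<in> {0..us}" using assms(12-15) by auto
  have origin: "0 \<le> FA 0 0" "0 \<le> FS 0 0"
    using assms(1,2,4) assms(10,11)[of 0] unfolding FA_def FS_def rhs_a_def rhs_s_def by simp_all
  have "Ta t \<in> {0..ua} \<and> Ts t \<in> {0..us}" if "0 \<le> t" for t
    by (rule cooperative_ode_solution_in_box[OF coop lip sol origin corner init that])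
  then have "Ta ` {0..} \<subseteq> {0..ua}" "Ts ` {0..} \<subseteq> {0..us}" by (simp_all add: image_subset_iff)
  then have "bounded (Ta ` {0..})" "bounded (Ts ` {0..})"
    using bounded_subset[OF bounded_closed_interval] by blast+
  then obtain a s where eq: "FA a s = 0" "FS a s = 0"
    and lim: "(Ta \<longlongrightarrow> a) at_top" "(Ts \<longlongrightarrow> s) at_top"
    using cooperative_ode_solution_tendsto_equilibrium[OF coop lip cont sol] by blast
  have "rhs_a lam q sB ea betaa a s = 0" "rhs_s lam q sB ea betas a s = 0"
    using eq assms(1,2) unfolding FA_def FS_def by simp_all
  then show ?thesis using lim by blast
qed

end
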